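(* Let $g\ge1$, $n=g+1$, $B\in\mathbb Z^{g\times n}$ with $B_{i,1}=1$, $B_{i,i+1}=-1$ and other entries $0$, and $Q=BB^T$. Let $\mathbf a$ be a vertex of the Voronoi polytope $V_Q$. Then $$\{B^T\mathbf c:\mathbf c\in\mathcal D_{\mathbf a,Q}\}=\mathcal D_{B^T\mathbf a,I_n}\cap H,$$ where $H=\{\mathbf x\in\mathbb R^n:\sum_{i=1}^nx_i=0\}$.
   Context: $V_Q=\{\mathbf a\in\mathbb R^g:\ \mathbf a^TQ\mathbf a\le(\mathbf a-\mathbf c)^TQ(\mathbf a-\mathbf c)\ \forall\mathbf c\in\mathbb Z^g\}$. For a vertex $\mathbf a$, $\mathcal D_{\mathbf a,Q}=\{\mathbf c\in\mathbb Z^g:\ \mathbf a^TQ\mathbf a=(\mathbf a-\mathbf c)^TQ(\mathbf a-\mathbf c)\}$. For $\mathbf b\in\mathbb R^n$, $\mathcal D_{\mathbf b,I_n}=\{\mathbf c\in\mathbb Z^n:\ \mathbf b^T\mathbf b=(\mathbf b-\mathbf c)^T(\mathbf b-\mathbf c)\}$ (Euclidean metric). The hyperplane $H$ is the space of real 1-cycles $H_1(\Gamma,\mathbb R)$ of the banana graph (the kernel of the edge Laplacian) in edge coordinates. *)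

theory Defs
  imports "HOL-Analysis.Analysis"
begin

text \<open>Index conventions: the g rows of B are indexed by a finite type 'g (so g = CARD('g) \<ge> 1),
  the n = g+1 columns by 'g option: column None is column 1, column Some i is column i+1.\<close>

definition bananaB :: "real ^ ('g::finite option) ^ 'g" where
  "bananaB = (\<chi> i j. if j = None then 1 else if j = Some i then -1 else 0)"

definition bananaQ :: "real ^ 'g ^ ('g::finite)" where
  "bananaQ = bananaB ** transpose bananaB"

definition qform :: "real ^ 'n ^ 'n \<Rightarrow> real ^ ('n::finite) \<Rightarrow> real" where
  "qform Q x = x \<bullet> (Q *v x)"

definition int_vec :: "real ^ ('n::finite) \<Rightarrow> bool" where
  "int_vec c \<longleftrightarrow> (\<forall>i. c $ i \<in> \<int>)"

definition voronoi :: "real ^ 'n ^ 'n \<Rightarrow> (real ^ ('n::finite)) set" where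
  "voronoi Q = {a. \<forall>c. int_vec c \<longrightarrow> qform Q a \<le> qform Q (a - c)}"

definition Dset :: "real ^ ('n::finite) \<Rightarrow> real ^ 'n ^ 'n \<Rightarrow> (real ^ 'n) set" where
  "Dset a Q = {c. int_vec c \<and> qform Q a = qform Q (a - c)}"

definition zero_sum_hyperplane :: "(real ^ ('n::finite)) set" where
  "zero_sum_hyperplane = {x. (\<Sum>j\<in>UNIV. x $ j) = 0}"

end

theory Submission
  imports Defs
begin

text \<open>Since Q = B B^T, the form x^T Q x is the squared Euclidean length of B^T x, so B^T turns
  the equation defining D(a, Q) into the one defining D(B^T a, I). Moreover
  B^T c = (c_1 + ... + c_g, -c_1, ..., -c_g), so B^T maps \<int>^g onto \<int>^n \<inter> H.\<close>

lemma qform_mult_transpose: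
  fixes M :: "real ^ 'm::finite ^ 'n::finite"
  shows "qform (M ** transpose M) x = qform (mat 1) (transpose M *v x)"
proof -
  have "qform (M ** transpose M) x = x \<bullet> (M *v (transpose M *v x))"
    by (simp add: qform_def matrix_vector_mul_assoc[symmetric] del: transpose_matrix_vector)
  also have "\<dots> = (x v* M) \<bullet> (transpose M *v x)"
    by (simp add: dot_lmul_matrix)
  finally show ?thesis
    by (simp add: qform_def)
qed

lemma image_Dset_mult_transpose:
  fixes M :: "real ^ 'm::finite ^ 'n::finite"
  assumes int_preserving: "\<And>c. int_vec c \<Longrightarrow> int_vec (transpose M *v c)"
  shows "(\<lambda>c. transpose M *v c) ` Dset a (M ** transpose M)
         = Dset (transpose M *v a) (mat 1) \<inter> (\<lambda>c. transpose M *v c) ` {c. int_vec c}"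
proof -
  have qform_eq_iff: "qform (M ** transpose M) a = qform (M ** transpose M) (a - c) \<longleftrightarrow>
      qform (mat 1) (transpose M *v a) = qform (mat 1) (transpose M *v a - transpose M *v c)" for c
    by (simp add: qform_mult_transpose matrix_vector_mult_diff_distrib)
  show ?thesis
    unfolding Dset_def using qform_eq_iff int_preserving by auto
qed

lemma sum_UNIV_option:
  fixes f :: "'a::finite option \<Rightarrow> 'b::comm_monoid_add"
  shows "(\<Sum>j\<in>UNIV. f j) = f None + (\<Sum>k\<in>UNIV. f (Some k))"
proof -
  have "(\<Sum>j\<in>UNIV. f j) = (\<Sum>j\<in>insert None (range Some). f j)"
    by (simp only: UNIV_option_conv)
  also have "\<dots> = f None + (\<Sum>j\<in>range Some. f j)"
    by (subst sum.insert) auto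
  also have "(\<Sum>j\<in>range Some. f j) = (\<Sum>k\<in>UNIV. f (Some k))"
    by (subst sum.reindex) (auto simp: inj_on_def)
  finally show ?thesis .
qed

lemma transpose_bananaB_mult_None:
  "(transpose (bananaB :: real ^ ('g::finite option) ^ 'g) *v v) $ None = (\<Sum>i\<in>UNIV. v $ i)"
  by (simp add: matrix_vector_mult_def transpose_def bananaB_def)

lemma transpose_bananaB_mult_Some:
  "(transpose (bananaB :: real ^ ('g::finite option) ^ 'g) *v v) $ Some k = - v $ k"
proof -
  have "(transpose (bananaB :: real ^ ('g option) ^ 'g) *v v) $ Some k
      = (\<Sum>i\<in>UNIV. (if k = i then -1 else 0) * v $ i)"
    by (simp add: matrix_vector_mult_def transpose_def bananaB_def)
  also have "\<dots> = (\<Sum>i\<in>UNIV. if k = i then - v $ i else 0)"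
    by (rule sum.cong) auto
  finally show ?thesis
    by simp
qed

lemma image_transpose_bananaB_int_vec:
  "(\<lambda>c. transpose (bananaB :: real ^ ('g::finite option) ^ 'g) *v c) ` {c. int_vec c}
   = {y. int_vec y} \<inter> zero_sum_hyperplane"
  (is "?f ` _ = _")
proof (intro equalityI subsetI)
  fix y assume "y \<in> ?f ` {c. int_vec c}"
  then obtain c where c: "int_vec c" and y: "y = ?f c" by auto
  have "int_vec y"
    unfolding int_vec_def
  proof
    fix j :: "'g option"
    show "y $ j \<in> \<int>"
      using c y by (cases j) (auto simp: int_vec_def transpose_bananaB_mult_None
          transpose_bananaB_mult_Some Ints_sum simp del: transpose_matrix_vector)
  qed
  moreover have "y \<in> zero_sum_hyperplane"
    using y by (simp add: zero_sum_hyperplane_def sum_UNIV_option transpose_bananaB_mult_None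
        transpose_bananaB_mult_Some sum_negf del: transpose_matrix_vector)
  ultimately show "y \<in> {y. int_vec y} \<inter> zero_sum_hyperplane" by simp
next
  fix y :: "real ^ 'g option"
  assume y: "y \<in> {y. int_vec y} \<inter> zero_sum_hyperplane"
  define c :: "real ^ 'g" where "c = (\<chi> k. - y $ Some k)"
  have "y $ None + (\<Sum>k\<in>UNIV. y $ Some k) = 0"
    using y by (simp add: zero_sum_hyperplane_def sum_UNIV_option)
  then have "y $ j = ?f c $ j" for j
    by (cases j) (simp_all add: transpose_bananaB_mult_None transpose_bananaB_mult_Some c_def
        sum_negf del: transpose_matrix_vector)
  moreover have "int_vec c"
    using y by (simp add: c_def int_vec_def)
  ultimately show "y \<in> ?f ` {c. int_vec c}"
    by (auto simp: vec_eq_iff simp del: transpose_matrix_vector)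
qed

theorem proposition3p8:
  fixes a :: "real ^ ('g::finite)"
  assumes "a extreme_point_of voronoi (bananaQ :: real ^ 'g ^ 'g)"
  shows "(\<lambda>c. transpose (bananaB :: real ^ ('g option) ^ 'g) *v c) ` Dset a bananaQ
         = Dset (transpose (bananaB :: real ^ ('g option) ^ 'g) *v a) (mat 1) \<inter> zero_sum_hyperplane"
proof -
  let ?B = "bananaB :: real ^ ('g option) ^ 'g"
  have "(\<lambda>c. transpose ?B *v c) ` Dset a bananaQ
        = Dset (transpose ?B *v a) (mat 1) \<inter> ({y. int_vec y} \<inter> zero_sum_hyperplane)"
    unfolding bananaQ_def image_transpose_bananaB_int_vec[symmetric]
    by (rule image_Dset_mult_transpose) (use image_transpose_bananaB_int_vec in blast)
  also have "\<dots> = Dset (transpose ?B *v a) (mat 1) \<inter> zero_sum_hyperplane"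
    by (auto simp: Dset_def)
  finally show ?thesis .
qed

end
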